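(* Consider the genetic algorithm with adaptive population size (APGA) described in the context, with maximum lifetime parameter $MaxLT$ and an arbitrary initial population size $P(0)\ge 1$. Then, regardless of $P(0)$, the population size after $MaxLT$ generations satisfies $$P(MaxLT) \le 2\,MaxLT + 1.$$
   Context: APGA is a steady-state genetic algorithm in which every individual carries a remaining lifetime (RLT). Parameters: an initial population size $P(0)$ and lifetime bounds $1\le MinLT\le MaxLT$; every individual, whether in the initial population or newly created, is assigned at creation a lifetime (its initial RLT) which is a positive integer between $MinLT$ and $MaxLT$ (the assignment may depend on fitness, e.g. via a bi-linear rule, but never exceeds $MaxLT$). Generation $t\ge 1$ proceeds as follows, starting from the population at the end of generation $t-1$: (1) decrement by 1 the RLT of every member except the best (highest-fitness) member of the population; (2) select 2 individuals, apply crossover and mutation to obtain 2 offspring, evaluate them and insert them into the population; (3) remove from the population all members whose RLT equals 0; (4) assign lifetimes (RLT values) to the 2 new members. $P(t)$ denotes the population size at the end of generation $t$, and $P(0)$ the size of the initial population. *)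

theory Defs
  imports Complex_Main
begin

text \<open>Individuals are abstract identities of a linearly ordered type 'i; fit gives the
  (fixed) fitness of each individual.\<close>

definition is_best :: "('i::linorder \<Rightarrow> real) \<Rightarrow> 'i set \<Rightarrow> 'i \<Rightarrow> bool" where
  "is_best fit S b \<longleftrightarrow> b \<in> S \<and>
     (\<forall>x\<in>S. x \<noteq> b \<longrightarrow> fit x < fit b \<or> (fit x = fit b \<and> x < b))"

text \<open>pop t = population (set of individuals) at the end of generation t,
  rlt t x = remaining lifetime of member x at the end of generation t.\<close>

definition apga_run ::
  "nat \<Rightarrow> nat \<Rightarrow> ('i::linorder \<Rightarrow> real) \<Rightarrow> (nat \<Rightarrow> 'i set) \<Rightarrow> (nat \<Rightarrow> 'i \<Rightarrow> nat) \<Rightarrow> bool" where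
  "apga_run MinLT MaxLT fit pop rlt \<longleftrightarrow>
     1 \<le> MinLT \<and> MinLT \<le> MaxLT \<and>
     finite (pop 0) \<and> pop 0 \<noteq> {} \<and>
     (\<forall>x\<in>pop 0. MinLT \<le> rlt 0 x \<and> rlt 0 x \<le> MaxLT) \<and>
     (\<forall>t. \<exists>b c1 c2.
        is_best fit (pop t) b \<and>
        c1 \<noteq> c2 \<and> c1 \<notin> (\<Union>s\<le>t. pop s) \<and> c2 \<notin> (\<Union>s\<le>t. pop s) \<and>
        (let dec = (\<lambda>x. if x = b then rlt t x else rlt t x - 1) in
           pop (Suc t) = {x \<in> pop t. dec x \<noteq> 0} \<union> {c1, c2} \<and>
           (\<forall>x\<in>pop t. dec x \<noteq> 0 \<longrightarrow> rlt (Suc t) x = dec x)) \<and>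
        MinLT \<le> rlt (Suc t) c1 \<and> rlt (Suc t) c1 \<le> MaxLT \<and>
        MinLT \<le> rlt (Suc t) c2 \<and> rlt (Suc t) c2 \<le> MaxLT)"

end

theory Submission
  imports Defs
begin

text \<open>Every initial member other than the initial best one is never the best again: the best
  member is always either that individual or an offspring, because a surviving best member can
  only be displaced by a newcomer.  Hence all other initial members age by one per generation
  and have died out after MaxLT generations, while at most 2 t offspring are created in t
  generations.\<close>

lemma is_best_eq:
  assumes "is_best fit S b" and "is_best fit T c" and "b \<in> T" and "c \<in> S"
  shows "b = c"
  using assms unfolding is_best_def by force

definition aged :: "('i \<Rightarrow> nat) \<Rightarrow> 'i \<Rightarrow> 'i \<Rightarrow> nat" where
  "aged r b x = (if x = b then r x else r x - 1)"

text \<open>A run of APGA with the choices of best member and offspring made explicit as functions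
  of the generation, keeping only the hypotheses the bound depends on.\<close>

locale apga_trace =
  fixes MaxLT :: nat and fit :: "'i::linorder \<Rightarrow> real"
    and pop :: "nat \<Rightarrow> 'i set" and rlt :: "nat \<Rightarrow> 'i \<Rightarrow> nat"
    and best child1 child2 :: "nat \<Rightarrow> 'i"
  assumes rlt_init_pos: "x \<in> pop 0 \<Longrightarrow> 0 < rlt 0 x"
    and rlt_init_le: "x \<in> pop 0 \<Longrightarrow> rlt 0 x \<le> MaxLT"
    and is_best: "is_best fit (pop t) (best t)"
    and child1_not_init: "child1 t \<notin> pop 0"
    and child2_not_init: "child2 t \<notin> pop 0"
    and pop_Suc: "pop (Suc t) = {x \<in> pop t. aged (rlt t) (best t) x \<noteq> 0} \<union> {child1 t, child2 t}"
    and rlt_Suc: "x \<in> pop t \<Longrightarrow> aged (rlt t) (best t) x \<noteq> 0 \<Longrightarrow>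
      rlt (Suc t) x = aged (rlt t) (best t) x"
    and rlt_child1_pos: "0 < rlt (Suc t) (child1 t)"
    and rlt_child2_pos: "0 < rlt (Suc t) (child2 t)"
begin

definition children :: "nat \<Rightarrow> 'i set" where
  "children n = (\<Union>s<n. {child1 s, child2 s})"

lemma children_Suc: "children (Suc n) = children n \<union> {child1 n, child2 n}"
  unfolding children_def by (auto simp: lessThan_Suc)

lemma finite_children: "finite (children n)"
  unfolding children_def by simp

lemma card_children_le: "card (children n) \<le> 2 * n"
proof (induction n)
  case 0
  then show ?case by (simp add: children_def)
next
  case (Suc n)
  have "card (children (Suc n)) \<le> card (children n) + card {child1 n, child2 n}"
    unfolding children_Suc by (rule card_Un_le)
  also have "card {child1 n, child2 n} \<le> 2"
    by (simp add: card_insert_le_m1)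
  finally show ?case using Suc.IH by simp
qed

lemma children_not_init: "x \<in> children n \<Longrightarrow> x \<notin> pop 0"
  unfolding children_def using child1_not_init child2_not_init by blast

lemma pop_subset_initial_children: "pop t \<subseteq> pop 0 \<union> children t"
  by (induction t) (use pop_Suc children_Suc in blast)+

lemma rlt_pos: "x \<in> pop t \<Longrightarrow> 0 < rlt t x"
proof (induction t arbitrary: x)
  case 0
  then show ?case by (rule rlt_init_pos)
next
  case (Suc t)
  then show ?case
    using pop_Suc[of t] rlt_Suc[of x t] rlt_child1_pos[of t] rlt_child2_pos[of t] by auto
qed

lemma best_in_pop: "best t \<in> pop t"
  using is_best[of t] unfolding is_best_def by blast

lemma best_survives: "best t \<in> pop (Suc t)"
  using pop_Suc[of t] best_in_pop[of t] rlt_pos[of "best t" t] by (auto simp: aged_def)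

lemma best_initial_or_child: "best t \<in> insert (best 0) (children t)"
proof (induction t)
  case 0
  then show ?case by simp
next
  case (Suc t)
  show ?case
  proof (cases "best (Suc t) \<in> {child1 t, child2 t}")
    case True
    then show ?thesis by (auto simp: children_Suc)
  next
    case False
    then have "best (Suc t) \<in> pop t"
      using best_in_pop[of "Suc t"] pop_Suc[of t] by blast
    then have "best (Suc t) = best t"
      using is_best_eq[OF is_best[of "Suc t"] is_best[of t]] best_survives[of t] by simp
    then show ?thesis using Suc.IH by (auto simp: children_Suc)
  qed
qed

lemma rlt_initial_nonbest:
  assumes "x \<in> pop 0" and "x \<noteq> best 0" and "x \<in> pop t"
  shows "rlt t x + t = rlt 0 x"
  using assms(3)
proof (induction t)
  case 0
  then show ?case by simp
next
  case (Suc t)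
  have alive: "x \<in> pop t" "aged (rlt t) (best t) x \<noteq> 0"
    using Suc.prems pop_Suc[of t] child1_not_init[of t] child2_not_init[of t] assms(1) by auto
  have "x \<noteq> best t"
    using best_initial_or_child[of t] children_not_init[of x t] assms(1,2) by auto
  then have "rlt (Suc t) x = rlt t x - 1"
    using rlt_Suc[OF alive] by (simp add: aged_def)
  then show ?case using Suc.IH[OF alive(1)] alive(2) by (simp add: aged_def \<open>x \<noteq> best t\<close>)
qed

lemma pop_subset_late_best_children:
  assumes "MaxLT \<le> t"
  shows "pop t \<subseteq> insert (best 0) (children t)"
proof
  fix x
  assume x: "x \<in> pop t"
  show "x \<in> insert (best 0) (children t)"
  proof (rule ccontr)
    assume "x \<notin> insert (best 0) (children t)"
    then have "x \<in> pop 0" "x \<noteq> best 0"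
      using pop_subset_initial_children x by blast+
    then have "rlt t x + t \<le> MaxLT"
      using rlt_initial_nonbest x rlt_init_le by metis
    then show False
      using rlt_pos[OF x] assms by simp
  qed
qed

theorem card_pop_late_le:
  assumes "MaxLT \<le> t"
  shows "card (pop t) \<le> 2 * t + 1"
proof -
  have "card (pop t) \<le> card (insert (best 0) (children t))"
    using pop_subset_late_best_children[OF assms]
    by (intro card_mono) (simp_all add: finite_children)
  also have "\<dots> \<le> card (children t) + 1"
    by (simp add: card_insert_if finite_children)
  finally show ?thesis
    using card_children_le[of t] by simp
qed

end

lemma apga_run_imp_trace:
  assumes run: "apga_run MinLT MaxLT fit pop rlt"
  shows "\<exists>best child1 child2. apga_trace MaxLT fit pop rlt best child1 child2"
proof -
  have step: "\<forall>t. \<exists>b c1 c2. is_best fit (pop t) b \<and>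
       c1 \<noteq> c2 \<and> c1 \<notin> (\<Union>s\<le>t. pop s) \<and> c2 \<notin> (\<Union>s\<le>t. pop s) \<and>
       pop (Suc t) = {x \<in> pop t. aged (rlt t) b x \<noteq> 0} \<union> {c1, c2} \<and>
       (\<forall>x\<in>pop t. aged (rlt t) b x \<noteq> 0 \<longrightarrow> rlt (Suc t) x = aged (rlt t) b x) \<and>
       MinLT \<le> rlt (Suc t) c1 \<and> rlt (Suc t) c1 \<le> MaxLT \<and>
       MinLT \<le> rlt (Suc t) c2 \<and> rlt (Suc t) c2 \<le> MaxLT"
    using run unfolding apga_run_def aged_def Let_def conj_assoc by (elim conjE)
  then obtain best child1 child2 where gen: "\<forall>t. is_best fit (pop t) (best t) \<and>
       child1 t \<noteq> child2 t \<and> child1 t \<notin> (\<Union>s\<le>t. pop s) \<and> child2 t \<notin> (\<Union>s\<le>t. pop s) \<and>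
       pop (Suc t) = {x \<in> pop t. aged (rlt t) (best t) x \<noteq> 0} \<union> {child1 t, child2 t} \<and>
       (\<forall>x\<in>pop t. aged (rlt t) (best t) x \<noteq> 0 \<longrightarrow> rlt (Suc t) x = aged (rlt t) (best t) x) \<and>
       MinLT \<le> rlt (Suc t) (child1 t) \<and> rlt (Suc t) (child1 t) \<le> MaxLT \<and>
       MinLT \<le> rlt (Suc t) (child2 t) \<and> rlt (Suc t) (child2 t) \<le> MaxLT"
    unfolding choice_iff by (elim exE)
  have "1 \<le> MinLT" and init: "\<forall>x\<in>pop 0. MinLT \<le> rlt 0 x \<and> rlt 0 x \<le> MaxLT"
    using run unfolding apga_run_def by simp_all
  have "apga_trace MaxLT fit pop rlt best child1 child2"
  proof
    fix t x
    show "is_best fit (pop t) (best t)"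
      and "pop (Suc t) = {x \<in> pop t. aged (rlt t) (best t) x \<noteq> 0} \<union> {child1 t, child2 t}"
      using gen by blast+
    show "child1 t \<notin> pop 0" and "child2 t \<notin> pop 0"
      using gen[rule_format, of t] by auto
    show "0 < rlt (Suc t) (child1 t)" and "0 < rlt (Suc t) (child2 t)"
      using gen[rule_format, of t] \<open>1 \<le> MinLT\<close> by auto
    show "x \<in> pop t \<Longrightarrow> aged (rlt t) (best t) x \<noteq> 0 \<Longrightarrow>
        rlt (Suc t) x = aged (rlt t) (best t) x"
      using gen by blast
    show "x \<in> pop 0 \<Longrightarrow> 0 < rlt 0 x" and "x \<in> pop 0 \<Longrightarrow> rlt 0 x \<le> MaxLT"
      using init \<open>1 \<le> MinLT\<close> by fastforce+
  qed
  then show ?thesis by blast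
qed

theorem theorem1:
  fixes fit :: "'i::linorder \<Rightarrow> real"
    and pop :: "nat \<Rightarrow> 'i set" and rlt :: "nat \<Rightarrow> 'i \<Rightarrow> nat"
  assumes "apga_run MinLT MaxLT fit pop rlt"
  shows "card (pop MaxLT) \<le> 2 * MaxLT + 1"
proof -
  obtain best child1 child2 where "apga_trace MaxLT fit pop rlt best child1 child2"
    using apga_run_imp_trace[OF assms] by blast
  then show ?thesis
    by (rule apga_trace.card_pop_late_le) simp
qed

end
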